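(* Let $S$ be as in the context, $1\le k<n$, and let $\phi\in\mathcal{T}_k(S)$ with $y=l(\phi)$. Then the following are equivalent: (i) $\phi$ has a unique Weiner link $(\phi,\varphi,c)$ and $\varphi$ has no siblings in $\mathcal{T}(S)$; (ii) $y$ has exactly one predecessor $x$ in $G_k(S)$, and $y$ is the only successor of $x$ in $G_k(S)$. Moreover, in this case $x=l(\psi)$ where $\psi$ is the parent of $\varphi$ in $\mathcal{T}(S)$.
   Context: $\Sigma$ is a finite totally ordered alphabet containing a symbol $\$$ smaller than every other symbol. $S$ is a string of length $n\ge 2$ over $\Sigma$ whose last character is $\$$ and in which $\$$ occurs nowhere else; strings are indexed from $1$ and $S[i..j]$ denotes a substring. The rotations of $S$ are the $n$ strings $S[i..n]S[1..i-1]$, $i\in[1,n]$. The rotation-trie $\mathcal{T}(S)$ is the trie of the set of rotations of $S$: a rooted tree whose edges are labeled by single characters, the children of a node having distinct edge labels and being ordered from left to right by increasing edge label. The label $l(\phi)$ of a node $\phi$ is the concatenation of edge labels on the root-to-$\phi$ path, and its level is $|l(\phi)|$; leaves are the $n$ nodes at level $n$. $\mathcal{T}_k(S)$ denotes the set of nodes at level $k$. Siblings are distinct nodes with the same parent. A triple $(\phi,\varphi,c)$ with $\phi,\varphi$ nodes of $\mathcal{T}(S)$ and $c\in\Sigma$ is a Weiner link of $\phi$ if $l(\varphi)=c\,l(\phi)$, or $|l(\phi)|=n$ and $l(\varphi)=c\,l(\phi)[1..n-1]$. A Weiner link $(\phi,\varphi,c)$ is unique if there is no Weiner link $(\phi,\psi,d)$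 with $\psi\ne\varphi$. For $1\le k\le n$ let $Z_k(S)=S[1..n]S[1..k]$. The order-$k$ de Bruijn graph $G_k(S)$ is the directed multigraph whose node set is $\{Z_k(S)[i..i+k-1]: i\in[1,n]\}$ and which, for every string $z\in\Sigma^{k+1}$ occurring exactly $m\ge1$ times as a substring of $Z_k(S)$, contains the edge $(z[1..k],z[2..k+1])$ with multiplicity $m$. A node $x$ is a predecessor of $y$ (and $y$ a successor of $x$) if $G_k(S)$ contains an edge $(x,y)$ of positive multiplicity. *)

theory Defs
  imports Main
begin

text \<open>Strings are lists, indexed from 0 internally (the paper indexes from 1).
  Nodes of the rotation trie are identified with their labels: a node is a
  prefix of some rotation; the root is the empty string; the parent of a
  non-root node w is butlast w.\<close>

definition rotations :: "'a list \<Rightarrow> 'a list set" where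
  "rotations S = {rotate i S | i. i < length S}"

definition trie_node :: "'a list \<Rightarrow> 'a list \<Rightarrow> bool" where
  "trie_node S w \<longleftrightarrow> (\<exists>r \<in> rotations S. w = take (length w) r)"

definition trie_level :: "'a list \<Rightarrow> nat \<Rightarrow> 'a list set" where
  "trie_level S k = {w. trie_node S w \<and> length w = k}"

definition weiner_link :: "'a list \<Rightarrow> 'a list \<Rightarrow> 'a list \<Rightarrow> 'a \<Rightarrow> bool" where
  "weiner_link S phi vphi c \<longleftrightarrow> trie_node S phi \<and> trie_node S vphi \<and>
     (vphi = c # phi \<or> (length phi = length S \<and> vphi = c # take (length S - 1) phi))"

definition unique_weiner_link :: "'a list \<Rightarrow> 'a list \<Rightarrow> 'a list \<Rightarrow> 'a \<Rightarrow> bool" where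
  "unique_weiner_link S phi vphi c \<longleftrightarrow> weiner_link S phi vphi c \<and>
     (\<forall>psi d. weiner_link S phi psi d \<longrightarrow> psi = vphi)"

definition siblings :: "'a list \<Rightarrow> 'a list \<Rightarrow> 'a list \<Rightarrow> bool" where
  "siblings S u v \<longleftrightarrow> trie_node S u \<and> trie_node S v \<and> u \<noteq> v \<and>
     u \<noteq> [] \<and> v \<noteq> [] \<and> butlast u = butlast v"

definition has_no_siblings :: "'a list \<Rightarrow> 'a list \<Rightarrow> bool" where
  "has_no_siblings S v \<longleftrightarrow> \<not> (\<exists>u. siblings S v u)"

definition Zk :: "'a list \<Rightarrow> nat \<Rightarrow> 'a list" where
  "Zk S k = S @ take k S"

definition substr :: "'a list \<Rightarrow> nat \<Rightarrow> nat \<Rightarrow> 'a list" where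
  "substr Z i m = take m (drop i Z)"

definition dbg_nodes :: "'a list \<Rightarrow> nat \<Rightarrow> 'a list set" where
  "dbg_nodes S k = {substr (Zk S k) i k | i. i < length S}"

definition dbg_mult :: "'a list \<Rightarrow> nat \<Rightarrow> 'a list \<Rightarrow> 'a list \<Rightarrow> nat" where
  "dbg_mult S k x y = card {i. i + k + 1 \<le> length (Zk S k) \<and>
      (let z = substr (Zk S k) i (k + 1) in take k z = x \<and> drop 1 z = y)}"

definition dbg_pred :: "'a list \<Rightarrow> nat \<Rightarrow> 'a list \<Rightarrow> 'a list \<Rightarrow> bool" where
  "dbg_pred S k x y \<longleftrightarrow> 0 < dbg_mult S k x y"

definition valid_string :: "'a::linorder \<Rightarrow> 'a list \<Rightarrow> bool" where
  "valid_string dl S \<longleftrightarrow> (\<forall>c. c \<noteq> dl \<longrightarrow> dl < c) \<and> length S \<ge> 2 \<and>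
     last S = dl \<and> dl \<notin> set (butlast S)"

end

theory Submission
  imports Defs
begin

text \<open>The windows of length k+1 of Z_k(S) are exactly the prefixes of length k+1 of the
  rotations of S, so the edges of G_k(S) are the nodes of level k+1 of the rotation trie,
  an edge z going from butlast z to tl z. Hence the predecessors of y are the strings
  c # butlast y with c y a trie node, i.e. they correspond to the Weiner links of y, and the
  successors of c # butlast y correspond to the trie nodes sharing the parent of c y.
  Neither the sentinel nor the ordering of the alphabet plays a role.\<close>

lemma trie_level_eq_image_rotate:
  assumes "m \<le> length S"
  shows "trie_level S m = (\<lambda>i. take m (rotate i S)) ` {..<length S}"
  using assms unfolding trie_level_def trie_node_def rotations_def by auto

lemma substr_Zk_eq_take_rotate:
  assumes "k < length S" "i < length S"
  shows "substr (Zk S k) i (Suc k) = take (Suc k) (rotate i S)"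
proof -
  have "rotate i S = drop i S @ take i S"
    using assms by (simp add: rotate_drop_take)
  moreover have "Suc (k + i) - length S \<le> i" "Suc (k + i) - length S \<le> k"
    using assms by arith+
  ultimately show ?thesis
    using assms unfolding substr_def Zk_def by (simp add: min_def)
qed

lemma dbg_mult_eq_card_rotations:
  assumes "k < length S"
  shows "dbg_mult S k x y = card {i. i < length S \<and>
           butlast (take (Suc k) (rotate i S)) = x \<and> tl (take (Suc k) (rotate i S)) = y}"
proof -
  have window: "take k w = butlast w" "drop 1 w = tl w" if "w = take (Suc k) (rotate i S)" for w i
    using that assms by (simp_all add: butlast_conv_take drop_Suc)
  have "length (Zk S k) = length S + k"
    using assms by (simp add: Zk_def)
  then have "(i + k + 1 \<le> length (Zk S k) \<and>
              take k (substr (Zk S k) i (k + 1)) = x \<and> drop 1 (substr (Zk S k) i (k + 1)) = y) \<longleftrightarrow>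
             (i < length S \<and>
              butlast (take (Suc k) (rotate i S)) = x \<and> tl (take (Suc k) (rotate i S)) = y)" for i
    using window[OF refl] substr_Zk_eq_take_rotate[OF assms, of i] by auto
  then show ?thesis
    unfolding dbg_mult_def Let_def by presburger
qed

lemma dbg_pred_iff_trie_level:
  assumes "k < length S"
  shows "dbg_pred S k x y \<longleftrightarrow> (\<exists>z \<in> trie_level S (Suc k). butlast z = x \<and> tl z = y)"
proof -
  have "finite {i. i < length S \<and>
           butlast (take (Suc k) (rotate i S)) = x \<and> tl (take (Suc k) (rotate i S)) = y}"
    by simp
  then show ?thesis
    unfolding dbg_pred_def dbg_mult_eq_card_rotations[OF assms]
      trie_level_eq_image_rotate[OF Suc_leI[OF assms]]
    by (auto simp: card_gt_0_iff)
qed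

lemma dbg_pred_iff_extension:
  assumes "k < length S" "length y = k" "1 \<le> k"
  shows "dbg_pred S k x y \<longleftrightarrow> (\<exists>c. trie_node S (c # y) \<and> x = c # butlast y)"
proof -
  have edge: "z \<in> trie_level S (Suc k) \<and> tl z = y \<longleftrightarrow> (\<exists>c. z = c # y \<and> trie_node S (c # y))"
    for z
    using assms(2) unfolding trie_level_def by (cases z) auto
  have "dbg_pred S k x y \<longleftrightarrow> (\<exists>z. (z \<in> trie_level S (Suc k) \<and> tl z = y) \<and> butlast z = x)"
    unfolding dbg_pred_iff_trie_level[OF assms(1)] by blast
  also have "\<dots> \<longleftrightarrow> (\<exists>c. trie_node S (c # y) \<and> butlast (c # y) = x)"
    unfolding edge by blast
  also have "\<dots> \<longleftrightarrow> (\<exists>c. trie_node S (c # y) \<and> x = c # butlast y)"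
    using assms(2,3) by auto
  finally show ?thesis .
qed

lemma unique_weiner_link_iff:
  assumes "length phi < length S"
  shows "unique_weiner_link S phi v c \<longleftrightarrow> trie_node S phi \<and> v = c # phi \<and>
           trie_node S (c # phi) \<and> (\<forall>d. trie_node S (d # phi) \<longrightarrow> d = c)"
  using assms unfolding unique_weiner_link_def weiner_link_def by auto

lemma unique_dbg_pred_iff:
  assumes "k < length S" "length y = k" "1 \<le> k"
  shows "dbg_pred S k x y \<and> (\<forall>x'. dbg_pred S k x' y \<longrightarrow> x' = x) \<longleftrightarrow>
           (\<exists>c. x = c # butlast y \<and> trie_node S (c # y) \<and>
                (\<forall>d. trie_node S (d # y) \<longrightarrow> d = c))"
  unfolding dbg_pred_iff_extension[OF assms] by auto

lemma has_no_siblings_iff: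
  assumes "trie_node S v" "v \<noteq> []"
  shows "has_no_siblings S v \<longleftrightarrow>
           (\<forall>z \<in> trie_level S (length v). butlast z = butlast v \<longrightarrow> z = v)"
proof -
  have same_length: "z \<noteq> [] \<and> butlast z = butlast v \<longleftrightarrow> length z = length v \<and> butlast z = butlast v"
    for z :: "'a list"
  proof -
    have "length z - 1 = length v - 1" if "butlast z = butlast v"
      using arg_cong[OF that, of length] by simp
    then show ?thesis
      using assms(2) by (cases z) (auto simp: le_Suc_eq)
  qed
  have "siblings S v z \<longleftrightarrow> z \<in> trie_level S (length v) \<and> butlast z = butlast v \<and> z \<noteq> v"
    for z
    using assms same_length[of z] unfolding siblings_def trie_level_def by auto
  then show ?thesis
    unfolding has_no_siblings_def by blast
qed

lemma unique_dbg_succ_iff_has_no_siblings: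
  assumes "k < length S" "length y = k" "1 \<le> k" "trie_node S (c # y)"
  shows "(\<forall>y'. dbg_pred S k (c # butlast y) y' \<longrightarrow> y' = y) \<longleftrightarrow> has_no_siblings S (c # y)"
proof -
  let ?same_parent = "\<lambda>z. z \<in> trie_level S (Suc k) \<and> butlast z = c # butlast y"
  have y: "y \<noteq> []"
    using assms(2,3) by auto
  \<comment> \<open>Strings of length at least 2 are determined by their butlast and tl; this is where k \<ge> 1 is used.\<close>
  have eq: "z = c # y" if "?same_parent z" "tl z = y" for z
  proof -
    from that(1) obtain a t where "z = a # t"
      unfolding trie_level_def by (cases z) auto
    with that y show ?thesis by simp
  qed
  have "(\<forall>y'. dbg_pred S k (c # butlast y) y' \<longrightarrow> y' = y) \<longleftrightarrow> (\<forall>z. ?same_parent z \<longrightarrow> tl z = y)"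
    unfolding dbg_pred_iff_trie_level[OF assms(1)] by blast
  also have "\<dots> \<longleftrightarrow> (\<forall>z. ?same_parent z \<longrightarrow> z = c # y)"
    using eq by auto
  also have "\<dots> \<longleftrightarrow> has_no_siblings S (c # y)"
    unfolding has_no_siblings_iff[OF assms(4) list.distinct(2)] using assms(2) y by auto
  finally show ?thesis .
qed

lemma unique_weiner_link_no_siblings_iff_unique_dbg_edge:
  assumes "1 \<le> k" "k < length S" "phi \<in> trie_level S k"
  shows "(\<exists>v c. unique_weiner_link S phi v c \<and> has_no_siblings S v) \<longleftrightarrow>
         (\<exists>x. dbg_pred S k x phi \<and> (\<forall>x'. dbg_pred S k x' phi \<longrightarrow> x' = x) \<and>
              (\<forall>y'. dbg_pred S k x y' \<longrightarrow> y' = phi))" (is "?lhs \<longleftrightarrow> ?rhs")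
proof -
  have node: "trie_node S phi" and len: "length phi = k"
    using assms(3) unfolding trie_level_def by auto
  note WL = unique_weiner_link_iff[of phi S, unfolded len, OF assms(2)]
  note PRED = unique_dbg_pred_iff[OF assms(2) len assms(1)]
  note SUCC = unique_dbg_succ_iff_has_no_siblings[OF assms(2) len assms(1)]
  show ?thesis
  proof
    assume ?lhs
    then obtain c where c: "trie_node S (c # phi)" "\<forall>d. trie_node S (d # phi) \<longrightarrow> d = c"
        and "has_no_siblings S (c # phi)"
      unfolding WL by blast
    then have "\<forall>y'. dbg_pred S k (c # butlast phi) y' \<longrightarrow> y' = phi"
      using SUCC[OF c(1)] by blast
    moreover have "dbg_pred S k (c # butlast phi) phi \<and>
        (\<forall>x'. dbg_pred S k x' phi \<longrightarrow> x' = c # butlast phi)"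
      using c by (intro PRED[THEN iffD2]) blast
    ultimately show ?rhs
      by blast
  next
    assume ?rhs
    then obtain x where "dbg_pred S k x phi \<and> (\<forall>x'. dbg_pred S k x' phi \<longrightarrow> x' = x)"
        and succ: "\<forall>y'. dbg_pred S k x y' \<longrightarrow> y' = phi"
      by blast
    then obtain c where x: "x = c # butlast phi" and c: "trie_node S (c # phi)"
        "\<forall>d. trie_node S (d # phi) \<longrightarrow> d = c"
      unfolding PRED by blast
    have "unique_weiner_link S phi (c # phi) c"
      using node c unfolding WL by blast
    moreover have "has_no_siblings S (c # phi)"
      using succ unfolding x SUCC[OF c(1)] .
    ultimately show ?lhs
      by blast
  qed
qed

lemma unique_dbg_pred_eq_butlast_weiner_link:
  assumes "1 \<le> k" "k < length S" "length phi = k"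
    and "unique_weiner_link S phi v c" "\<forall>x'. dbg_pred S k x' phi \<longrightarrow> x' = x"
  shows "x = butlast v"
proof -
  from assms(4) have "v = c # phi" "trie_node S (c # phi)"
    unfolding unique_weiner_link_iff[of phi S, unfolded assms(3), OF assms(2)] by blast+
  then have "dbg_pred S k (butlast v) phi"
    using assms(1,3) dbg_pred_iff_extension[OF assms(2,3,1)] by auto
  with assms(5) show ?thesis
    by blast
qed

theorem mainTheorem2:
  fixes S :: "'a::{linorder,finite} list" and dl :: 'a and k :: nat and phi :: "'a list"
  assumes "valid_string dl S"
    and "1 \<le> k" and "k < length S"
    and "phi \<in> trie_level S k"
  shows "((\<exists>vphi c. unique_weiner_link S phi vphi c \<and> has_no_siblings S vphi) \<longleftrightarrow>
         (\<exists>x. dbg_pred S k x phi \<and> (\<forall>x'. dbg_pred S k x' phi \<longrightarrow> x' = x) \<and>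
              (\<forall>y'. dbg_pred S k x y' \<longrightarrow> y' = phi))) \<and>
         (\<forall>vphi c x. unique_weiner_link S phi vphi c \<and> has_no_siblings S vphi \<and>
         dbg_pred S k x phi \<and> (\<forall>x'. dbg_pred S k x' phi \<longrightarrow> x' = x) \<and>
         (\<forall>y'. dbg_pred S k x y' \<longrightarrow> y' = phi) \<longrightarrow> x = butlast vphi)"
proof -
  have "length phi = k"
    using assms(4) unfolding trie_level_def by simp
  then show ?thesis
    using unique_weiner_link_no_siblings_iff_unique_dbg_edge[OF assms(2-4)]
      unique_dbg_pred_eq_butlast_weiner_link[OF assms(2,3)]
    by blast
qed

end
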